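(* Let $G$ be a finite group with $d(G) \geq 2$. Then $d(G/\mathrm{Cyc}(G)) = d(G)$.
   Context: For a finite group $H$, $d(H)$ denotes the minimal size of a generating set of $H$. The cycliciser of $G$ is $\mathrm{Cyc}(G) = \{c \in G \mid \langle c,g\rangle \text{ is cyclic for all } g \in G\}$; it is a normal subgroup of $G$. *)

theory Defs
  imports "HOL-Algebra.Algebra"
begin

definition min_gens :: "('a, 'b) monoid_scheme \<Rightarrow> nat" where
  "min_gens H = (LEAST n. \<exists>S. S \<subseteq> carrier H \<and> finite S \<and> card S = n
                              \<and> generate H S = carrier H)"

definition Cyc :: "('a, 'b) monoid_scheme \<Rightarrow> 'a set" where
  "Cyc G = {c \<in> carrier G. \<forall>g \<in> carrier G. cyclic_group (subgroup_generated G {c, g})}"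

end

theory Submission
  imports Defs
begin

text \<open>
  An element c lies in Cyc G iff every g lies together with c in some cyclic subgroup.
  Consequently Cyc G is a central, hence normal, subgroup, and any element x together with
  the finite group Cyc G lies in a single cyclic subgroup generated by some y.
  If the cosets of a set R generate G / Cyc G, then R together with Cyc G generates G, and
  replacing one element x of R by the corresponding y yields a generating set of G of size
  at most max 1 |R|. So d(G) \<le> max 1 d(G / Cyc G); since d(G / N) \<le> d(G) for every normal
  subgroup N, the hypothesis d(G) \<ge> 2 forces equality.
\<close>

lemma (in group) generate_subset_generate:
  assumes "A \<subseteq> carrier G" "B \<subseteq> generate G A"
  shows "generate G B \<subseteq> generate G A"
  using generate_subgroup_incl[OF assms(2) generate_is_subgroup[OF assms(1)]] .

lemma (in group) cyclic_group_subgroup_generated_iff: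
  assumes "A \<subseteq> carrier G"
  shows "cyclic_group (subgroup_generated G A) \<longleftrightarrow> (\<exists>x\<in>carrier G. generate G A = generate G {x})"
proof -
  let ?S = "subgroup_generated G A"
  have carrier_S: "carrier ?S = generate G A"
    using assms by (simp add: carrier_subgroup_generated Int_absorb1)
  interpret S: group ?S by simp
  have powers_eq: "range (\<lambda>n::int. x [^]\<^bsub>?S\<^esub> n) = generate G {x}" if "x \<in> carrier ?S" for x
  proof -
    have "x \<in> carrier G" using that carrier_subgroup_generated_subset by blast
    then show ?thesis using int_pow_subgroup_generated[OF that] generate_pow by auto
  qed
  have "cyclic_group ?S \<longleftrightarrow> (\<exists>x\<in>generate G A. generate G A = generate G {x})"
    unfolding S.cyclic_group using powers_eq carrier_S by auto
  also have "\<dots> \<longleftrightarrow> (\<exists>x\<in>carrier G. generate G A = generate G {x})"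
    using generate_incl[OF assms] generate.incl[of _ "{_}" G] by blast
  finally show ?thesis .
qed

lemma (in group) generate_pair_eq_generate_singleton:
  assumes x: "x \<in> carrier G" and a: "a \<in> generate G {x}" and b: "b \<in> generate G {x}"
  shows "\<exists>y\<in>carrier G. generate G {a, b} = generate G {y}"
proof -
  obtain m n :: int where m: "a = x [^] m" and n: "b = x [^] n"
    using a b generate_pow[OF x] by blast
  obtain u v where uv: "u * m + v * n = gcd m n" using bezout_int by blast
  define y where "y = x [^] gcd m n"
  have ab: "{a, b} \<subseteq> carrier G" using m n x by auto
  have "y = a [^] u \<otimes> b [^] v"
    using x by (simp add: y_def m n int_pow_pow int_pow_mult[symmetric] uv[symmetric] mult.commute)
  then have "y \<in> generate G {a, b}"
    using subgroup_int_pow_closed[OF generate_is_subgroup[OF ab]] generate.incl[of _ "{a, b}" G]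
    by (simp add: generate.eng)
  moreover have "a = y [^] (m div gcd m n)" "b = y [^] (n div gcd m n)"
    using x by (simp_all add: y_def m n int_pow_pow)
  then have "{a, b} \<subseteq> generate G {y}"
    using generate_pow[of y] x y_def by auto
  ultimately have "generate G {a, b} = generate G {y}"
    using ab x y_def generate_subset_generate[of "{a, b}" "{y}"] generate_subset_generate[of "{y}" "{a, b}"]
    by auto
  then show ?thesis using x y_def by auto
qed

lemma (in group) Cyc_iff:
  "c \<in> Cyc G \<longleftrightarrow> c \<in> carrier G \<and>
     (\<forall>g\<in>carrier G. \<exists>x\<in>carrier G. c \<in> generate G {x} \<and> g \<in> generate G {x})"
proof -
  have "cyclic_group (subgroup_generated G {c, g}) \<longleftrightarrow>
          (\<exists>x\<in>carrier G. c \<in> generate G {x} \<and> g \<in> generate G {x})"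
    if "c \<in> carrier G" "g \<in> carrier G" for g
    using that cyclic_group_subgroup_generated_iff[of "{c, g}"] generate.incl[of _ "{c, g}" G]
      generate_pair_eq_generate_singleton
    by (metis empty_subsetI insert_subset insertCI)
  then show ?thesis unfolding Cyc_def by auto
qed

lemma (in group) Cyc_subgroup: "subgroup (Cyc G) G"
proof
  show "Cyc G \<subseteq> carrier G" unfolding Cyc_def by blast
next
  have "\<one> \<in> generate G {g} \<and> g \<in> generate G {g}" for g
    by (simp add: generate.one generate.incl)
  then show "\<one> \<in> Cyc G" unfolding Cyc_iff by blast
next
  fix c assume c: "c \<in> Cyc G"
  have "\<exists>x\<in>carrier G. inv c \<in> generate G {x} \<and> g \<in> generate G {x}"
    if g: "g \<in> carrier G" for g
  proof -
    obtain x where x: "x \<in> carrier G" "c \<in> generate G {x}" "g \<in> generate G {x}"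
      using c g Cyc_iff by blast
    then have "inv c \<in> generate G {x}" by (simp add: generate_m_inv_closed)
    then show ?thesis using x by blast
  qed
  then show "inv c \<in> Cyc G" using c Cyc_iff by simp
next
  fix c d assume c: "c \<in> Cyc G" and d: "d \<in> Cyc G"
  have "\<exists>y\<in>carrier G. c \<otimes> d \<in> generate G {y} \<and> g \<in> generate G {y}"
    if g: "g \<in> carrier G" for g
  proof -
    obtain x where x: "x \<in> carrier G" "c \<in> generate G {x}" "g \<in> generate G {x}"
      using c g Cyc_iff by blast
    obtain y where y: "y \<in> carrier G" "d \<in> generate G {y}" "x \<in> generate G {y}"
      using d x(1) Cyc_iff by blast
    have "generate G {x} \<subseteq> generate G {y}"
      using y by (intro generate_subset_generate) auto
    then have "c \<otimes> d \<in> generate G {y}" "g \<in> generate G {y}"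
      using x y(2) by (auto intro: generate.eng)
    then show ?thesis using y(1) by blast
  qed
  then show "c \<otimes> d \<in> Cyc G" using c d Cyc_iff by simp
qed

lemma (in group) Cyc_central:
  assumes "c \<in> Cyc G" "g \<in> carrier G"
  shows "c \<otimes> g = g \<otimes> c"
proof -
  obtain x where x: "x \<in> carrier G" "c \<in> generate G {x}" "g \<in> generate G {x}"
    using assms Cyc_iff by blast
  then obtain m n :: int where "c = x [^] m" "g = x [^] n"
    using generate_pow[OF x(1)] by blast
  then show ?thesis using x(1) by (simp add: int_pow_mult[symmetric] add.commute)
qed

lemma (in group) Cyc_normal: "Cyc G \<lhd> G"
proof (rule normal_invI[OF Cyc_subgroup])
  fix g c assume g: "g \<in> carrier G" and c: "c \<in> Cyc G"
  have "c \<in> carrier G" using c subgroup.mem_carrier[OF Cyc_subgroup] by blast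
  have "g \<otimes> c \<otimes> inv g = c \<otimes> g \<otimes> inv g" using Cyc_central[OF c g] by simp
  also have "\<dots> = c" using g \<open>c \<in> carrier G\<close> by (simp add: m_assoc)
  finally have "g \<otimes> c \<otimes> inv g = c" .
  then show "g \<otimes> c \<otimes> inv g \<in> Cyc G" using c by simp
qed

lemma (in group) insert_Cyc_subset_generate_singleton:
  assumes "finite D" "D \<subseteq> Cyc G" "x \<in> carrier G"
  shows "\<exists>y\<in>carrier G. insert x D \<subseteq> generate G {y}"
  using assms(1,2)
proof (induction D rule: finite_induct)
  case empty
  then show ?case using assms(3) generate.incl[of x "{x}" G] by blast
next
  case (insert c D)
  then obtain y where y: "y \<in> carrier G" "insert x D \<subseteq> generate G {y}" by blast
  obtain z where z: "z \<in> carrier G" "c \<in> generate G {z}" "y \<in> generate G {z}"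
    using insert.prems y(1) Cyc_iff by blast
  have "generate G {y} \<subseteq> generate G {z}"
    using z by (intro generate_subset_generate) auto
  then show ?case using y z by blast
qed

lemma min_gens_le_card:
  assumes "S \<subseteq> carrier H" "finite S" "generate H S = carrier H"
  shows "min_gens H \<le> card S"
  unfolding min_gens_def using assms by (intro Least_le) blast

lemma (in group) min_gens_attained:
  assumes "finite (carrier G)"
  shows "\<exists>S\<subseteq>carrier G. finite S \<and> card S = min_gens G \<and> generate G S = carrier G"
proof -
  have "generate G (carrier G) = carrier G"
    using generate_incl[of "carrier G"] generate.incl[of _ "carrier G" G] by blast
  then have "\<exists>n S. S \<subseteq> carrier G \<and> finite S \<and> card S = n \<and> generate G S = carrier G"
    using assms by blast
  then show ?thesis unfolding min_gens_def by (rule LeastI_ex)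
qed

lemma (in normal) group_hom_r_coset_Mod: "group_hom G (G Mod H) (\<lambda>a. H #> a)"
  using r_coset_hom_Mod factorgroup_is_group is_group
  by (simp add: group_hom_def group_hom_axioms_def)

lemma (in normal) min_gens_FactGroup_le:
  assumes "finite (carrier G)"
  shows "min_gens (G Mod H) \<le> min_gens G"
proof -
  let ?\<pi> = "\<lambda>a. H #> a"
  obtain S where S: "S \<subseteq> carrier G" "finite S" "card S = min_gens G" "generate G S = carrier G"
    using min_gens_attained[OF assms] by blast
  have "generate (G Mod H) (?\<pi> ` S) = carrier (G Mod H)"
    using group_hom.generate_img[OF group_hom_r_coset_Mod S(1)] S(4) by (simp add: carrier_FactGroup)
  then have "min_gens (G Mod H) \<le> card (?\<pi> ` S)"
    using S(1,2) by (intro min_gens_le_card) (auto simp: carrier_FactGroup)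
  also have "\<dots> \<le> min_gens G" using S(2,3) card_image_le by metis
  finally show ?thesis .
qed

lemma (in normal) generate_Un_eq_carrier_if_FactGroup:
  assumes R: "R \<subseteq> carrier G"
    and gen: "generate (G Mod H) ((\<lambda>a. H #> a) ` R) = carrier (G Mod H)"
  shows "generate G (R \<union> H) = carrier G"
proof
  show "generate G (R \<union> H) \<subseteq> carrier G" using R subset generate_incl by simp
next
  show "carrier G \<subseteq> generate G (R \<union> H)"
  proof
    fix g assume g: "g \<in> carrier G"
    have "H #> g \<in> (\<lambda>a. H #> a) ` generate G R"
      using gen g group_hom.generate_img[OF group_hom_r_coset_Mod R] by (auto simp: carrier_FactGroup)
    then obtain y where y: "y \<in> generate G R" "H #> g = H #> y" by blast
    then have "g \<in> H #> y" using repr_independenceD[OF subgroup_axioms g] by simp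
    then obtain h where h: "h \<in> H" "g = h \<otimes> y" unfolding r_coset_def by blast
    have "h \<in> generate G (R \<union> H)" using h(1) generate.incl[of h "R \<union> H" G] by blast
    moreover have "y \<in> generate G (R \<union> H)" using y(1) mono_generate[of R "R \<union> H"] by blast
    ultimately show "g \<in> generate G (R \<union> H)" using h(2) generate.eng by metis
  qed
qed

lemma (in normal) ex_lift_FactGroup_generating_set:
  assumes "finite (carrier G)"
  shows "\<exists>R\<subseteq>carrier G. finite R \<and> card R \<le> min_gens (G Mod H) \<and> generate G (R \<union> H) = carrier G"
proof -
  let ?\<pi> = "\<lambda>a. H #> a"
  have "finite (carrier (G Mod H))" using assms by (simp add: carrier_FactGroup)
  then obtain T where T: "T \<subseteq> carrier (G Mod H)" "finite T" "card T = min_gens (G Mod H)"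
      "generate (G Mod H) T = carrier (G Mod H)"
    using group.min_gens_attained[OF factorgroup_is_group] by blast
  obtain R where R: "R \<subseteq> carrier G" "T = ?\<pi> ` R" "card R \<le> card T" "finite R"
  proof -
    obtain r where r: "\<And>t. t \<in> T \<Longrightarrow> r t \<in> carrier G \<and> t = ?\<pi> (r t)"
      using T(1) by (simp add: carrier_FactGroup subset_iff image_iff) metis
    have "T = ?\<pi> ` r ` T" using r by force
    moreover have "r ` T \<subseteq> carrier G" using r by blast
    ultimately show ?thesis using that T(2) card_image_le finite_imageI by metis
  qed
  then show ?thesis using T(3,4) generate_Un_eq_carrier_if_FactGroup[of R] by metis
qed

lemma (in group) min_gens_le_if_generate_Un_Cyc:
  assumes "finite (carrier G)" "R \<subseteq> carrier G" "finite R" "generate G (R \<union> Cyc G) = carrier G"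
  shows "min_gens G \<le> max 1 (card R)"
proof -
  obtain x where x: "x \<in> carrier G" "R = {} \<or> x \<in> R" using assms(2) by blast
  \<comment> \<open>for empty R, x is arbitrary and the new generating set is the singleton {y}\<close>
  have "finite (Cyc G)" using assms(1) subgroup.subset[OF Cyc_subgroup] finite_subset by blast
  then obtain y where y: "y \<in> carrier G" "insert x (Cyc G) \<subseteq> generate G {y}"
    using insert_Cyc_subset_generate_singleton x(1) by blast
  define R' where "R' = insert y (R - {x})"
  have R': "R' \<subseteq> carrier G" "finite R'" using R'_def assms(2,3) y(1) by auto
  have "generate G {y} \<subseteq> generate G R'"
    using R' R'_def generate.incl[of y R' G] by (intro generate_subset_generate) auto
  then have "R \<union> Cyc G \<subseteq> generate G R'"
    using y(2) R'_def generate.incl[of _ R' G] by blast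
  then have "carrier G \<subseteq> generate G R'"
    using assms(4) generate_subset_generate[OF R'(1)] by metis
  then have "generate G R' = carrier G" using generate_incl[OF R'(1)] by (rule subset_antisym[rotated])
  then have "min_gens G \<le> card R'" using R' by (intro min_gens_le_card)
  also have "card R' \<le> Suc (card (R - {x}))" unfolding R'_def by (rule card_insert_le_m1) auto
  also have "\<dots> \<le> max 1 (card R)" using x(2) assms(3) by (auto simp: card_Diff_singleton_if)
  finally show ?thesis .
qed

theorem lemma2p3:
  fixes G :: "('a, 'b) monoid_scheme"
  assumes "group G" and "finite (carrier G)" and "min_gens G \<ge> 2"
  shows "min_gens (G Mod Cyc G) = min_gens G"
proof -
  interpret group G by fact
  interpret N: normal "Cyc G" G by (rule Cyc_normal)
  obtain R where "R \<subseteq> carrier G" "finite R" "card R \<le> min_gens (G Mod Cyc G)"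
      "generate G (R \<union> Cyc G) = carrier G"
    using N.ex_lift_FactGroup_generating_set[OF assms(2)] by blast
  then have "min_gens G \<le> max 1 (min_gens (G Mod Cyc G))"
    using min_gens_le_if_generate_Un_Cyc[OF assms(2)] by (meson le_trans max.mono order_refl)
  moreover have "min_gens (G Mod Cyc G) \<le> min_gens G"
    using N.min_gens_FactGroup_le[OF assms(2)] .
  ultimately show ?thesis using assms(3) by linarith
qed

end
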